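(* Let $G$ be a group, $A$ an additive abelian group with a right $G$-action by group automorphisms, $n\in\mathbb Z_+$ and $a\in\mathcal P_n(G,A)$. Then $D^na$ is an $n$-cocycle of $G$ with values in $A^G$: it lies in $\mathcal C^n(G,A^G)$ and $\delta^nD^na=0$.
   Context: Right action: $a\mapsto a^g$, $a^{\mathbf e}=a$, $(a^g)^h=a^{gh}$, additive in $a$; $\mathbf e$ the identity. $A^G=\{a:a^g=a\ \forall g\}$. $\mathcal C^0(G,M)=M$; for $n\ge1$, $\mathcal C^n(G,M)$ is the group of functions $G^n\to M$ vanishing whenever some argument is $\mathbf e$. For $n\ge1$, $(d_nc)(g_1,\dots,g_n)=[c(g_1,\dots,g_{n-1})]^{g_n}-c(g_1,\dots,g_{n-1})$; $D^0=\mathrm{id}_A$, $D^n=d_nD^{n-1}$; $\mathcal P_n(G,A)=\ker D^{n+1}$. Coboundary (trivial left action): $[\delta^nc](g_1,\dots,g_{n+1})=c(g_2,\dots,g_{n+1})+\sum_{i=1}^{n}(-1)^ic(g_1,\dots,g_ig_{i+1},\dots,g_{n+1})+(-1)^{n+1}c(g_1,\dots,g_n)$, with $\delta^0=0$. *)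

theory Defs
  imports "HOL-Algebra.Group"
begin

text \<open>Elements of G^n are lists of length n of elements of carrier G;
 functions G^n \<rightarrow> M are functions on lists.\<close>

definition right_action :: "('g, 'b) monoid_scheme \<Rightarrow> ('a::ab_group_add \<Rightarrow> 'g \<Rightarrow> 'a) \<Rightarrow> bool" where
  "right_action G act \<longleftrightarrow>
     (\<forall>a. act a \<one>\<^bsub>G\<^esub> = a) \<and>
     (\<forall>a g h. g \<in> carrier G \<longrightarrow> h \<in> carrier G \<longrightarrow> act (act a g) h = act a (g \<otimes>\<^bsub>G\<^esub> h)) \<and>
     (\<forall>a b g. g \<in> carrier G \<longrightarrow> act (a + b) g = act a g + act b g)"

definition tuples :: "('g, 'b) monoid_scheme \<Rightarrow> nat \<Rightarrow> 'g list set" where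
  "tuples G n = {gs. length gs = n \<and> set gs \<subseteq> carrier G}"

definition invariants :: "('g, 'b) monoid_scheme \<Rightarrow> ('a \<Rightarrow> 'g \<Rightarrow> 'a) \<Rightarrow> 'a set" where
  "invariants G act = {a. \<forall>g \<in> carrier G. act a g = a}"

definition cochains :: "('g, 'b) monoid_scheme \<Rightarrow> nat \<Rightarrow> 'a::zero set \<Rightarrow> ('g list \<Rightarrow> 'a) set" where
  "cochains G n M = {c. (\<forall>gs \<in> tuples G n. c gs \<in> M) \<and>
                        (\<forall>gs \<in> tuples G n. \<one>\<^bsub>G\<^esub> \<in> set gs \<longrightarrow> c gs = 0)}"

definition dop :: "('a::ab_group_add \<Rightarrow> 'g \<Rightarrow> 'a) \<Rightarrow> ('g list \<Rightarrow> 'a) \<Rightarrow> 'g list \<Rightarrow> 'a" where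
  "dop act c gs = act (c (butlast gs)) (last gs) - c (butlast gs)"

fun Dop :: "('a::ab_group_add \<Rightarrow> 'g \<Rightarrow> 'a) \<Rightarrow> nat \<Rightarrow> 'a \<Rightarrow> 'g list \<Rightarrow> 'a" where
  "Dop act 0 a = (\<lambda>_. a)"
| "Dop act (Suc n) a = dop act (Dop act n a)"

definition Pset :: "('g, 'b) monoid_scheme \<Rightarrow> ('a::ab_group_add \<Rightarrow> 'g \<Rightarrow> 'a) \<Rightarrow> nat \<Rightarrow> 'a set" where
  "Pset G act n = {a. \<forall>gs \<in> tuples G (Suc n). Dop act (Suc n) a gs = 0}"

definition signed :: "nat \<Rightarrow> 'a::ab_group_add \<Rightarrow> 'a" where
  "signed i x = (if even i then x else - x)"

text \<open>Coboundary with trivial left action; positions are 1-based in the paper,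
 list index i-1 here.\<close>
definition merge_at :: "('g, 'b) monoid_scheme \<Rightarrow> nat \<Rightarrow> 'g list \<Rightarrow> 'g list" where
  "merge_at G i gs = take (i - 1) gs @ [gs ! (i - 1) \<otimes>\<^bsub>G\<^esub> gs ! i] @ drop (i + 1) gs"

definition coboundary :: "('g, 'b) monoid_scheme \<Rightarrow> nat \<Rightarrow> ('g list \<Rightarrow> 'a::ab_group_add) \<Rightarrow> 'g list \<Rightarrow> 'a" where
  "coboundary G n c gs =
     (if n = 0 then 0 else
      c (tl gs) + (\<Sum>i = 1..n. signed i (c (merge_at G i gs)))
        + signed (n + 1) (c (take n gs)))"

end

theory Submission
  imports Defs
begin

text \<open>Unfolding the recursion, \<open>D\<^sup>n a (g\<^sub>1, \<dots>, g\<^sub>n)\<close> is obtained from \<open>a\<close> by applying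
  \<open>x \<mapsto> x\<^sup>g - x\<close> for \<open>g = g\<^sub>1, \<dots>, g\<^sub>n\<close> in turn. This operator is additive, kills \<open>x\<close> when
  \<open>g = \<one>\<close>, and satisfies \<open>x\<^sup>g\<^sup>h - x = ((x\<^sup>g - x)\<^sup>h - (x\<^sup>g - x)) + (x\<^sup>g - x) + (x\<^sup>h - x)\<close>.
  For \<open>a \<in> \<P>\<^sub>n\<close> the first summand dies after one more step, so \<open>D\<^sup>n a\<close> evaluated at
  the tuple with \<open>g\<^sub>i, g\<^sub>i\<^sub>+\<^sub>1\<close> merged equals the sum of its values at the tuples with
  \<open>g\<^sub>i\<^sub>+\<^sub>1\<close>, resp. \<open>g\<^sub>i\<close>, deleted. The coboundary then telescopes to \<open>0\<close>, and
  \<open>D\<^sup>n a\<close> is invariant because \<open>D\<^sup>n\<^sup>+\<^sup>1 a = 0\<close>.\<close>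

definition iter_diff :: "('a::ab_group_add \<Rightarrow> 'g \<Rightarrow> 'a) \<Rightarrow> 'a \<Rightarrow> 'g list \<Rightarrow> 'a" where
  "iter_diff act x gs = foldl (\<lambda>x g. act x g - x) x gs"

lemma iter_diff_Nil [simp]: "iter_diff act x [] = x"
  by (simp add: iter_diff_def)

lemma iter_diff_Cons [simp]: "iter_diff act x (g # gs) = iter_diff act (act x g - x) gs"
  by (simp add: iter_diff_def)

lemma iter_diff_append: "iter_diff act x (gs @ hs) = iter_diff act (iter_diff act x gs) hs"
  by (simp add: iter_diff_def)

lemma Dop_eq_iter_diff: "length gs = n \<Longrightarrow> Dop act n a gs = iter_diff act a gs"
proof (induction n arbitrary: gs)
  case 0
  then show ?case by simp
next
  case (Suc n)
  then have gs: "gs = butlast gs @ [last gs]"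
    by (metis append_butlast_last_id length_Suc_conv list.discI)
  have "Dop act (Suc n) a gs = iter_diff act (iter_diff act a (butlast gs)) [last gs]"
    using Suc by (simp add: dop_def)
  also have "\<dots> = iter_diff act a gs"
    by (subst (2) gs) (simp only: iter_diff_append)
  finally show ?case .
qed

definition delete_at :: "nat \<Rightarrow> 'c list \<Rightarrow> 'c list" where
  "delete_at j gs = take j gs @ drop (Suc j) gs"

context
  fixes G :: "('g, 'b) monoid_scheme" and act :: "'a::ab_group_add \<Rightarrow> 'g \<Rightarrow> 'a"
  assumes action: "right_action G act"
begin

lemma act_one: "act x \<one>\<^bsub>G\<^esub> = x"
  using action by (simp add: right_action_def)

lemma act_mult: "g \<in> carrier G \<Longrightarrow> h \<in> carrier G \<Longrightarrow> act (act x g) h = act x (g \<otimes>\<^bsub>G\<^esub> h)"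
  using action by (simp add: right_action_def)

lemma act_add: "g \<in> carrier G \<Longrightarrow> act (x + y) g = act x g + act y g"
  using action by (simp add: right_action_def)

lemma act_diff: "g \<in> carrier G \<Longrightarrow> act (x - y) g = act x g - act y g"
  using act_add[of g "x - y" y] by (simp add: algebra_simps)

lemma iter_diff_add:
  "set gs \<subseteq> carrier G \<Longrightarrow> iter_diff act (x + y) gs = iter_diff act x gs + iter_diff act y gs"
proof (induction gs arbitrary: x y)
  case Nil
  then show ?case by simp
next
  case (Cons g gs)
  then have "act (x + y) g - (x + y) = (act x g - x) + (act y g - y)"
    by (simp add: act_add)
  then show ?case
    using Cons by (simp only: iter_diff_Cons) simp
qed

lemma iter_diff_zero: "set gs \<subseteq> carrier G \<Longrightarrow> iter_diff act 0 gs = 0"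
  using iter_diff_add[of gs 0 0] by simp

lemma iter_diff_eq_0_if_one_mem:
  "set gs \<subseteq> carrier G \<Longrightarrow> \<one>\<^bsub>G\<^esub> \<in> set gs \<Longrightarrow> iter_diff act x gs = 0"
proof (induction gs arbitrary: x)
  case Nil
  then show ?case by simp
next
  case (Cons g gs)
  then show ?case
    by (cases "g = \<one>\<^bsub>G\<^esub>") (simp_all add: act_one iter_diff_zero)
qed

lemma iter_diff_mult_Cons:
  assumes "g \<in> carrier G" "h \<in> carrier G" "set gs \<subseteq> carrier G"
  shows "iter_diff act x ((g \<otimes>\<^bsub>G\<^esub> h) # gs)
    = iter_diff act x (g # h # gs) + iter_diff act x (g # gs) + iter_diff act x (h # gs)"
proof -
  have "act x (g \<otimes>\<^bsub>G\<^esub> h) - x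
      = (act (act x g - x) h - (act x g - x)) + (act x g - x) + (act x h - x)"
    using assms by (simp add: act_diff act_mult algebra_simps)
  then show ?thesis
    using assms(3) by (simp only: iter_diff_Cons iter_diff_add)
qed

lemma iter_diff_mult:
  assumes "set us \<subseteq> carrier G" "g \<in> carrier G" "h \<in> carrier G" "set vs \<subseteq> carrier G"
  shows "iter_diff act x (us @ (g \<otimes>\<^bsub>G\<^esub> h) # vs)
    = iter_diff act x (us @ g # h # vs) + iter_diff act x (us @ g # vs) + iter_diff act x (us @ h # vs)"
  using iter_diff_mult_Cons[OF assms(2-4)] by (simp only: iter_diff_append)

lemma iter_diff_eq_0_if_Pset:
  "a \<in> Pset G act n \<Longrightarrow> gs \<in> tuples G (Suc n) \<Longrightarrow> iter_diff act a gs = 0"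
proof -
  assume "a \<in> Pset G act n" and gs: "gs \<in> tuples G (Suc n)"
  then have "Dop act (Suc n) a gs = 0"
    unfolding Pset_def by blast
  moreover have "length gs = Suc n"
    using gs by (simp add: tuples_def)
  ultimately show ?thesis
    by (simp only: Dop_eq_iter_diff)
qed

lemma Dop_in_cochains:
  assumes "a \<in> Pset G act n"
  shows "Dop act n a \<in> cochains G n (invariants G act)"
proof -
  have invariant: "act (Dop act n a gs) g = Dop act n a gs"
    if gs: "gs \<in> tuples G n" and g: "g \<in> carrier G" for gs g
  proof -
    have "gs @ [g] \<in> tuples G (Suc n)"
      using gs g by (simp add: tuples_def)
    then have "iter_diff act a (gs @ [g]) = 0"
      by (rule iter_diff_eq_0_if_Pset[OF assms])
    then show ?thesis
      using gs by (simp add: tuples_def Dop_eq_iter_diff iter_diff_append)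
  qed
  have vanishing: "Dop act n a gs = 0"
    if "gs \<in> tuples G n" "\<one>\<^bsub>G\<^esub> \<in> set gs" for gs
    using that by (simp add: tuples_def Dop_eq_iter_diff iter_diff_eq_0_if_one_mem)
  show ?thesis
    unfolding cochains_def invariants_def using invariant vanishing by blast
qed

lemma Dop_merge_at:
  assumes a: "a \<in> Pset G act n" and gs: "gs \<in> tuples G (Suc n)" and i: "1 \<le> i" "i \<le> n"
  shows "Dop act n a (merge_at G i gs)
    = Dop act n a (delete_at i gs) + Dop act n a (delete_at (i - 1) gs)"
proof -
  have len: "length gs = Suc n" and carrier: "set gs \<subseteq> carrier G"
    using gs by (auto simp: tuples_def)
  obtain k where k: "i = Suc k"
    using i by (metis Suc_pred' One_nat_def Suc_le_eq)
  define us g h vs where "us = take k gs" and "g = gs ! k" and "h = gs ! Suc k"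
    and "vs = drop (Suc (Suc k)) gs"
  have "drop k gs = g # h # vs"
    using i k len unfolding g_def h_def vs_def by (simp add: Cons_nth_drop_Suc)
  then have split: "gs = us @ g # h # vs"
    unfolding us_def by (metis append_take_drop_id)
  have len_us: "length us = k"
    using i k len unfolding us_def by simp
  have carriers: "set us \<subseteq> carrier G" "g \<in> carrier G" "h \<in> carrier G" "set vs \<subseteq> carrier G"
    using carrier by (subst (asm) split; simp)+
  have lengths: "length (us @ (g \<otimes>\<^bsub>G\<^esub> h) # vs) = n" "length (us @ g # vs) = n"
    "length (us @ h # vs) = n"
    using len split by auto
  have zero: "iter_diff act a (us @ g # h # vs) = 0"
    using iter_diff_eq_0_if_Pset[OF a gs] unfolding split .
  have "Dop act n a (merge_at G i gs) = iter_diff act a (us @ (g \<otimes>\<^bsub>G\<^esub> h) # vs)"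
    unfolding merge_at_def k split
    by (simp add: len_us[symmetric] nth_append Dop_eq_iter_diff[OF lengths(1)])
  also have "\<dots> = iter_diff act a (us @ g # vs) + iter_diff act a (us @ h # vs)"
    using iter_diff_mult[OF carriers, of a] zero by simp
  also have "\<dots> = Dop act n a (delete_at i gs) + Dop act n a (delete_at (i - 1) gs)"
    unfolding delete_at_def k split
    by (simp add: len_us[symmetric] Dop_eq_iter_diff[OF lengths(2)] Dop_eq_iter_diff[OF lengths(3)])
  finally show ?thesis .
qed

end

lemma alternating_sum_telescope:
  fixes P :: "nat \<Rightarrow> 'a::ab_group_add"
  shows "P 0 + (\<Sum>i = 1..n. signed i (P i + P (i - 1))) + signed (n + 1) (P n) = 0"
proof (induction n)
  case 0
  then show ?case by (simp add: signed_def)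
next
  case (Suc n)
  define S where "S = P 0 + (\<Sum>i = 1..n. signed i (P i + P (i - 1)))"
  have S: "S = - signed (n + 1) (P n)"
    using Suc unfolding S_def by (simp add: eq_neg_iff_add_eq_0)
  have "P 0 + (\<Sum>i = 1..Suc n. signed i (P i + P (i - 1))) + signed (Suc n + 1) (P (Suc n))
      = S + signed (Suc n) (P (Suc n) + P n) + signed (Suc n + 1) (P (Suc n))"
    unfolding S_def by (simp add: algebra_simps)
  also have "\<dots> = 0"
    unfolding S by (cases "even n") (simp_all add: signed_def)
  finally show ?case .
qed

lemma coboundary_Dop_eq_0:
  assumes "right_action G act" and "a \<in> Pset G act n" and "gs \<in> tuples G (Suc n)"
  shows "coboundary G n (Dop act n a) gs = 0"
proof -
  define Q where "Q j = Dop act n a (delete_at j gs)" for j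
  have len: "length gs = Suc n"
    using assms(3) by (simp add: tuples_def)
  have merged: "(\<Sum>i = 1..n. signed i (Dop act n a (merge_at G i gs)))
      = (\<Sum>i = 1..n. signed i (Q i + Q (i - 1)))"
    using Dop_merge_at[OF assms] by (intro sum.cong) (simp_all add: Q_def)
  have ends: "Dop act n a (tl gs) = Q 0" "Dop act n a (take n gs) = Q n"
    using len by (simp_all add: Q_def delete_at_def drop_Suc)
  show ?thesis
  proof (cases "n = 0")
    case False
    show ?thesis
      using alternating_sum_telescope[of Q n]
      unfolding coboundary_def if_not_P[OF False] merged ends .
  qed (simp add: coboundary_def)
qed

theorem corollary1p22:
  fixes G :: "('g, 'b) monoid_scheme"
    and act :: "'a::ab_group_add \<Rightarrow> 'g \<Rightarrow> 'a"
    and n :: nat and a :: 'a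
  assumes "group G"
    and "right_action G act"
    and "n \<ge> 1"
    and "a \<in> Pset G act n"
  shows "Dop act n a \<in> cochains G n (invariants G act) \<and>
         (\<forall>gs \<in> tuples G (n + 1). coboundary G n (Dop act n a) gs = 0)"
  using Dop_in_cochains[OF assms(2,4)] coboundary_Dop_eq_0[OF assms(2,4)] by simp

end
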